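(* Let $\sigma^0\in\{-1,+1\}^{\mathbb T}$ be any configuration on the triangular lattice and $\sigma^n=\mathrm T^n\sigma^0$ (with $\sigma^\infty=\lim_n\sigma^n$ where it exists). Let $(\zeta_0,\dots,\zeta_k)$ be an m-path on which $\sigma^0$ is constant, equal to $s$. If $\zeta_0$ and $\zeta_k$ are fixated (i.e., $\sigma^n_{\zeta_0}=\sigma^n_{\zeta_k}=s$ for all $n$), then every $\zeta_i$ is fixated: $\sigma^n_{\zeta_i}=s$ for all $n$ and all $i=0,\dots,k$.
   Context: Each site $x$ of the triangular lattice $\mathbb T$ has a set $\mathcal N(x)$ of six neighbors. The cellular automaton $\mathrm T$ acts synchronously: $(\mathrm T\sigma)_x=\sigma_x$ if $x$ has at least two neighbors $y_1,y_2$ with $\sigma_{y_1}=\sigma_{y_2}=\sigma_x$ and $y_1,y_2$ not neighbors of each other; otherwise $(\mathrm T\sigma)_x=-\sigma_x$. A path is a sequence $(\zeta_0,\dots,\zeta_k)$ of distinct sites with $\zeta_{i+1}\in\mathcal N(\zeta_i)$; it is an m-path if $\zeta_{i-1}$ and $\zeta_{i+1}$ are not neighbors for $i=1,\dots,k-1$. *)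

theory Defs
  imports Main
begin

text \<open>Triangular lattice: sites are integer pairs (a,b) standing for a*e1 + b*e2 with
  e1 = (1,0), e2 = (1/2, sqrt 3/2).\<close>

type_synonym site = "int \<times> int"

definition nbr_offsets :: "site set" where
  "nbr_offsets = {(1,0),(-1,0),(0,1),(0,-1),(1,-1),(-1,1)}"

definition nbrs :: "site \<Rightarrow> site set" where
  "nbrs x = {(fst x + fst d, snd x + snd d) | d. d \<in> nbr_offsets}"

definition is_nbr :: "site \<Rightarrow> site \<Rightarrow> bool" where
  "is_nbr x y \<longleftrightarrow> y \<in> nbrs x"

type_synonym config = "site \<Rightarrow> int"

definition spin_config :: "config \<Rightarrow> bool" where
  "spin_config \<sigma> \<longleftrightarrow> (\<forall>x. \<sigma> x \<in> {-1, 1})"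

definition T :: "config \<Rightarrow> config" where
  "T \<sigma> x = (if \<exists>y1 y2. y1 \<in> nbrs x \<and> y2 \<in> nbrs x \<and> \<sigma> y1 = \<sigma> x \<and> \<sigma> y2 = \<sigma> x
                      \<and> y1 \<noteq> y2 \<and> \<not> is_nbr y1 y2
             then \<sigma> x else - \<sigma> x)"

definition is_path :: "site list \<Rightarrow> bool" where
  "is_path \<zeta> \<longleftrightarrow> \<zeta> \<noteq> [] \<and> distinct \<zeta> \<and>
     (\<forall>i. i + 1 < length \<zeta> \<longrightarrow> is_nbr (\<zeta> ! i) (\<zeta> ! (i + 1)))"

definition is_m_path :: "site list \<Rightarrow> bool" where
  "is_m_path \<zeta> \<longleftrightarrow> is_path \<zeta> \<and>
     (\<forall>i. 1 \<le> i \<and> i + 1 < length \<zeta> \<longrightarrow> \<not> is_nbr (\<zeta> ! (i - 1)) (\<zeta> ! (i + 1)))"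

end

theory Submission
  imports Defs
begin

text \<open>An interior site \<zeta>(i) of an m-path has the two neighbours \<zeta>(i-1) and \<zeta>(i+1), which are
  not neighbours of each other. As long as all three carry the spin s, the rule of T keeps
  the spin of \<zeta>(i), so induction on the time n shows that the whole path stays at s once
  its two endpoints do.\<close>

lemma is_nbr_iff: "is_nbr x y \<longleftrightarrow> (fst y - fst x, snd y - snd x) \<in> nbr_offsets"
  unfolding is_nbr_def nbrs_def by (cases x; cases y) force

lemma is_nbr_sym: "is_nbr x y \<Longrightarrow> is_nbr y x"
  by (auto simp: is_nbr_iff nbr_offsets_def)

lemma T_keeps_spin:
  assumes "is_nbr x y1" "is_nbr x y2" "y1 \<noteq> y2" "\<not> is_nbr y1 y2"
    and "\<sigma> y1 = \<sigma> x" "\<sigma> y2 = \<sigma> x"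
  shows "T \<sigma> x = \<sigma> x"
  using assms unfolding T_def is_nbr_def by (intro if_P) blast

lemma m_path_interior_nbrs:
  assumes "is_m_path \<zeta>" "0 < i" "i + 1 < length \<zeta>"
  shows "is_nbr (\<zeta> ! i) (\<zeta> ! (i - 1))" "is_nbr (\<zeta> ! i) (\<zeta> ! (i + 1))"
    and "\<zeta> ! (i - 1) \<noteq> \<zeta> ! (i + 1)" "\<not> is_nbr (\<zeta> ! (i - 1)) (\<zeta> ! (i + 1))"
proof -
  have path: "distinct \<zeta>" "\<And>j. j + 1 < length \<zeta> \<Longrightarrow> is_nbr (\<zeta> ! j) (\<zeta> ! (j + 1))"
    using assms(1) by (auto simp: is_m_path_def is_path_def)
  show "is_nbr (\<zeta> ! i) (\<zeta> ! (i - 1))"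
    using is_nbr_sym path(2)[of "i - 1"] assms(2,3) by simp
  show "is_nbr (\<zeta> ! i) (\<zeta> ! (i + 1))"
    using path(2) assms(3) .
  show "\<zeta> ! (i - 1) \<noteq> \<zeta> ! (i + 1)"
    using path(1) assms(3) by (simp add: nth_eq_iff_index_eq)
  show "\<not> is_nbr (\<zeta> ! (i - 1)) (\<zeta> ! (i + 1))"
    using assms by (simp add: is_m_path_def)
qed

lemma T_const_on_m_path_interior:
  assumes "is_m_path \<zeta>" "\<forall>j < length \<zeta>. \<sigma> (\<zeta> ! j) = s" "0 < i" "i + 1 < length \<zeta>"
  shows "T \<sigma> (\<zeta> ! i) = s"
proof -
  have "T \<sigma> (\<zeta> ! i) = \<sigma> (\<zeta> ! i)"
    using m_path_interior_nbrs[OF assms(1,3,4)] assms(2,4)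
    by (intro T_keeps_spin[of _ "\<zeta> ! (i - 1)" "\<zeta> ! (i + 1)"]) auto
  then show ?thesis
    using assms(2,4) by simp
qed

theorem lemma1:
  fixes \<sigma>0 :: config and \<zeta> :: "site list" and s :: int
  assumes "spin_config \<sigma>0"
    and "is_m_path \<zeta>"
    and "\<forall>i < length \<zeta>. \<sigma>0 (\<zeta> ! i) = s"
    and "\<forall>n. (T ^^ n) \<sigma>0 (\<zeta> ! 0) = s"
    and "\<forall>n. (T ^^ n) \<sigma>0 (last \<zeta>) = s"
  shows "\<forall>n. \<forall>i < length \<zeta>. (T ^^ n) \<sigma>0 (\<zeta> ! i) = s"
proof
  fix n
  show "\<forall>i < length \<zeta>. (T ^^ n) \<sigma>0 (\<zeta> ! i) = s"
  proof (induction n)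
    case 0
    then show ?case using assms(3) by simp
  next
    case (Suc n)
    have "(T ^^ Suc n) \<sigma>0 (\<zeta> ! i) = s" if "i < length \<zeta>" for i
    proof -
      from that consider "i = 0" | "i = length \<zeta> - 1" | "0 < i" "i + 1 < length \<zeta>"
        by linarith
      then show ?thesis
      proof cases
        case 1
        with assms(4) show ?thesis by blast
      next
        case 2
        with assms(2) have "\<zeta> ! i = last \<zeta>"
          by (simp add: is_m_path_def is_path_def last_conv_nth)
        with assms(5) show ?thesis by metis
      next
        case 3
        with assms(2) Suc.IH show ?thesis by (simp add: T_const_on_m_path_interior)
      qed
    qed
    then show ?case by blast
  qed
qed

end
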